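(* Let $(X,Y)$ be distributed according to an $(\alpha,\lambda)$-locally consistent RBM with $\alpha>0$. Let $u\neq v\in V_{obs}$ be such that there is a latent node $k\in V_{lat}$ with $J_{uk}\neq0$ and $J_{vk}\ne0$, and let $S\subseteq V_{obs}\setminus\{u,v\}$. Then \[ \mathrm{Cov}^{\mathrm{avg}}(u,v\mid S)\;\ge\;\alpha^2e^{-12\lambda}. \]
   Context: A Restricted Boltzmann Machine (RBM) with $n$ observed variables $X\in\{\pm1\}^n$ (indexed by $V_{obs}=[n]$) and $m$ latent variables $Y\in\{\pm1\}^m$ (indexed by $V_{lat}=[m]$) is the distribution $\Pr[X=x,Y=y]=\frac1Z\exp(x^TJy+h^Tx+g^Ty)$, where $J\in\mathbb R^{n\times m}$, $h\in\mathbb R^n$, $g\in\mathbb R^m$ are arbitrary and $Z$ is the normalizing constant. Its edge set is $E=\{(i,j):J_{ij}\neq0\}$. The RBM is $(\alpha,\lambda)$-locally consistent if: (i) for each $j\in[m]$, either $J_{ij}\ge0$ for all $i$ or $J_{ij}\le0$ for all $i$; (ii) $|J_{ij}|\ge\alpha$ for every $(i,j)\in E$; (iii) $\sum_j|J_{ij}|+|h_i|\le\lambda$ for all $i\in[n]$; (iv) $\sum_i|J_{ij}|+|g_j|\le\lambda$ for all $j\in[m]$. For observed $u,v$ and $S\subseteq V_{obs}\setminus\{u,v\}$ with configuration $x_S$, $\mathrm{Cov}(u,v\mid X_S=x_S)=\mathbb E[X_uX_v\mid X_S=x_S]-\mathbb E[X_u\mid X_S=x_S]\,\mathbb E[X_v\mid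 X_S=x_S]$, and the average conditional covariance is $\mathrm{Cov}^{\mathrm{avg}}(u,v\mid S)=\mathbb E_{x_S}[\mathrm{Cov}(u,v\mid X_S=x_S)]$, where $x_S$ is drawn from the marginal law of $X_S$. *)

theory Defs
  imports "HOL-Analysis.Analysis"
begin

text \<open>Indices: observed nodes are 0..<n, latent nodes 0..<m.
 A spin configuration on k nodes is a function nat => real taking values in {-1,1}
 on {..<k} and 0 elsewhere (extensional convention).\<close>

definition spins :: "nat \<Rightarrow> (nat \<Rightarrow> real) set" where
  "spins k = {x. (\<forall>i<k. x i = 1 \<or> x i = -1) \<and> (\<forall>i\<ge>k. x i = 0)}"

definition rbm_weight :: "nat \<Rightarrow> nat \<Rightarrow> (nat \<Rightarrow> nat \<Rightarrow> real) \<Rightarrow> (nat \<Rightarrow> real) \<Rightarrow> (nat \<Rightarrow> real)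
    \<Rightarrow> (nat \<Rightarrow> real) \<Rightarrow> (nat \<Rightarrow> real) \<Rightarrow> real" where
  "rbm_weight n m J h g x y =
     exp ((\<Sum>i<n. \<Sum>j<m. x i * J i j * y j) + (\<Sum>i<n. h i * x i) + (\<Sum>j<m. g j * y j))"

definition rbm_Z :: "nat \<Rightarrow> nat \<Rightarrow> (nat \<Rightarrow> nat \<Rightarrow> real) \<Rightarrow> (nat \<Rightarrow> real) \<Rightarrow> (nat \<Rightarrow> real) \<Rightarrow> real" where
  "rbm_Z n m J h g = (\<Sum>x\<in>spins n. \<Sum>y\<in>spins m. rbm_weight n m J h g x y)"

definition rbm_pX :: "nat \<Rightarrow> nat \<Rightarrow> (nat \<Rightarrow> nat \<Rightarrow> real) \<Rightarrow> (nat \<Rightarrow> real) \<Rightarrow> (nat \<Rightarrow> real)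
    \<Rightarrow> (nat \<Rightarrow> real) \<Rightarrow> real" where
  "rbm_pX n m J h g x = (\<Sum>y\<in>spins m. rbm_weight n m J h g x y) / rbm_Z n m J h g"

definition rbm_condE :: "nat \<Rightarrow> nat \<Rightarrow> (nat \<Rightarrow> nat \<Rightarrow> real) \<Rightarrow> (nat \<Rightarrow> real) \<Rightarrow> (nat \<Rightarrow> real)
    \<Rightarrow> nat set \<Rightarrow> (nat \<Rightarrow> real) \<Rightarrow> ((nat \<Rightarrow> real) \<Rightarrow> real) \<Rightarrow> real" where
  "rbm_condE n m J h g S xS f =
     (let A = {x\<in>spins n. \<forall>i\<in>S. x i = xS i} in
      (\<Sum>x\<in>A. rbm_pX n m J h g x * f x) / (\<Sum>x\<in>A. rbm_pX n m J h g x))"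

definition rbm_condCov :: "nat \<Rightarrow> nat \<Rightarrow> (nat \<Rightarrow> nat \<Rightarrow> real) \<Rightarrow> (nat \<Rightarrow> real) \<Rightarrow> (nat \<Rightarrow> real)
    \<Rightarrow> nat \<Rightarrow> nat \<Rightarrow> nat set \<Rightarrow> (nat \<Rightarrow> real) \<Rightarrow> real" where
  "rbm_condCov n m J h g u v S xS =
     rbm_condE n m J h g S xS (\<lambda>x. x u * x v)
     - rbm_condE n m J h g S xS (\<lambda>x. x u) * rbm_condE n m J h g S xS (\<lambda>x. x v)"

text \<open>Drawing x_S from the marginal of X_S is the same as drawing the full X and
 restricting to S, so we average Cov(u,v | X_S = X|_S) over X ~ marginal law.\<close>
definition rbm_avgCov :: "nat \<Rightarrow> nat \<Rightarrow> (nat \<Rightarrow> nat \<Rightarrow> real) \<Rightarrow> (nat \<Rightarrow> real) \<Rightarrow> (nat \<Rightarrow> real)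
    \<Rightarrow> nat \<Rightarrow> nat \<Rightarrow> nat set \<Rightarrow> real" where
  "rbm_avgCov n m J h g u v S =
     (\<Sum>x\<in>spins n. rbm_pX n m J h g x * rbm_condCov n m J h g u v S x)"

definition locally_consistent :: "nat \<Rightarrow> nat \<Rightarrow> (nat \<Rightarrow> nat \<Rightarrow> real) \<Rightarrow> (nat \<Rightarrow> real) \<Rightarrow> (nat \<Rightarrow> real)
    \<Rightarrow> real \<Rightarrow> real \<Rightarrow> bool" where
  "locally_consistent n m J h g alpha lam \<longleftrightarrow>
     (\<forall>j<m. (\<forall>i<n. J i j \<ge> 0) \<or> (\<forall>i<n. J i j \<le> 0)) \<and>
     (\<forall>i<n. \<forall>j<m. J i j \<noteq> 0 \<longrightarrow> \<bar>J i j\<bar> \<ge> alpha) \<and>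
     (\<forall>i<n. (\<Sum>j<m. \<bar>J i j\<bar>) + \<bar>h i\<bar> \<le> lam) \<and>
     (\<forall>j<m. (\<Sum>i<n. \<bar>J i j\<bar>) + \<bar>g j\<bar> \<le> lam)"

end

theory Submission
  imports Defs "HOL-Library.FuncSet"
begin

text \<open>Pin the observed spins in \<open>S\<close> and sum out the remaining ones: the conditional law becomes a
mixture over latent configurations \<open>Y\<close>, under which the observed spins are independent with
\<open>E[X_i | Y] = tanh (local field of i)\<close>. Flipping every latent spin by the sign of its column makes
all couplings nonnegative; then the mixing weight of \<open>Y\<close>, viewed as a function of a subset of the
latent nodes, is log-supermodular and all local fields are monotone. The law of total covariance
with respect to the latent node \<open>k\<close>, together with the FKG inequality for the averaged-out
functions, bounds \<open>Cov(X_u, X_v | x_S)\<close> below by the average covariance of the two tanh's in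
the single spin \<open>Y_k\<close>. Flipping \<open>Y_k\<close> changes the weight by a factor at most \<open>e^(2\<lambda>)\<close> and
each tanh by at least \<open>2 \<alpha> e^(-2\<lambda>)\<close>, which gives \<open>\<alpha>\<^sup>2 e^(-6\<lambda>)\<close> for every pinning.\<close>

section \<open>Correlation inequalities on the Boolean lattice\<close>

definition log_supermodular_on :: "'a set \<Rightarrow> ('a set \<Rightarrow> real) \<Rightarrow> bool" where
  "log_supermodular_on I F \<longleftrightarrow> (\<forall>A\<subseteq>I. \<forall>B\<subseteq>I. F A * F B \<le> F (A \<union> B) * F (A \<inter> B))"

\<comment> \<open>\<open>(\<Sum> w)\<^sup>2\<close> times the covariance of \<open>f\<close> and \<open>g\<close> under the probability proportional to \<open>w\<close>\<close>
definition weighted_cov :: "('a \<Rightarrow> real) \<Rightarrow> ('a \<Rightarrow> real) \<Rightarrow> ('a \<Rightarrow> real) \<Rightarrow> 'a set \<Rightarrow> real" where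
  "weighted_cov w f g X =
     (\<Sum>x\<in>X. w x) * (\<Sum>x\<in>X. w x * f x * g x) - (\<Sum>x\<in>X. w x * f x) * (\<Sum>x\<in>X. w x * g x)"

lemma weighted_cov_shift:
  "weighted_cov w (\<lambda>x. f x - a) (\<lambda>x. g x - b) X = weighted_cov w f g X"
  by (simp add: weighted_cov_def algebra_simps sum_subtractf sum.distrib sum_distrib_left)

lemma four_functions_two_point:
  fixes a0 a1 b0 b1 c0 c1 d0 d1 :: real
  assumes nonneg: "0 \<le> a0" "0 \<le> a1" "0 \<le> b0" "0 \<le> b1" "0 \<le> c0" "0 \<le> c1" "0 \<le> d0" "0 \<le> d1"
    and "a0 * b0 \<le> c0 * d0" "a0 * b1 \<le> c1 * d0" "a1 * b0 \<le> c1 * d0" "a1 * b1 \<le> c1 * d1"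
  shows "(a0 + a1) * (b0 + b1) \<le> (c0 + c1) * (d0 + d1)"
proof -
  have cross: "a0 * b1 + a1 * b0 \<le> c1 * d0 + c0 * d1"
  proof (cases "c1 * d0 = 0")
    case True
    have "0 \<le> a0 * b1" "0 \<le> a1 * b0" "0 \<le> c0 * d1" using nonneg by simp_all
    then show ?thesis using assms True by linarith
  next
    case False
    then have pos: "0 < c1 * d0" using nonneg by (simp add: less_le)
    have "(a0 * b1) * (a1 * b0) = (a0 * b0) * (a1 * b1)" by (simp add: ac_simps)
    also have "\<dots> \<le> (c0 * d0) * (c1 * d1)" using assms by (intro mult_mono[of "a0 * b0"]) auto
    finally have prod: "(a0 * b1) * (a1 * b0) \<le> (c1 * d0) * (c0 * d1)" by (simp add: ac_simps)
    \<comment> \<open>\<open>p, q \<le> P\<close> and \<open>p q \<le> P R\<close> give \<open>p + q \<le> P + R\<close>, here with \<open>P = c1 d0\<close>, \<open>R = c0 d1\<close>\<close>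
    have "0 \<le> (c1 * d0 - a0 * b1) * (c1 * d0 - a1 * b0)" using assms by (intro mult_nonneg_nonneg) auto
    with prod have "(c1 * d0) * (a0 * b1 + a1 * b0) \<le> (c1 * d0) * (c1 * d0 + c0 * d1)"
      by (simp add: algebra_simps)
    then show ?thesis using pos by (rule mult_left_le_imp_le)
  qed
  have "(a0 + a1) * (b0 + b1) = a0 * b0 + (a0 * b1 + a1 * b0) + a1 * b1" by (simp add: algebra_simps)
  also have "\<dots> \<le> c0 * d0 + (c1 * d0 + c0 * d1) + c1 * d1" using assms cross by linarith
  also have "\<dots> = (c0 + c1) * (d0 + d1)" by (simp add: algebra_simps)
  finally show ?thesis .
qed

lemma sum_Pow_insert:
  assumes "finite I" "a \<notin> I"
  shows "sum f (Pow (insert a I)) = (\<Sum>A\<in>Pow I. f A + f (insert a A))"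
proof -
  have inj: "inj_on (insert a) (Pow I)"
    using assms(2) unfolding inj_on_def by (metis PowD insert_ident subsetD)
  have "sum f (Pow (insert a I)) = sum f (Pow I \<union> insert a ` Pow I)" by (simp add: Pow_insert)
  also have "\<dots> = sum f (Pow I) + sum f (insert a ` Pow I)"
    using assms by (intro sum.union_disjoint) auto
  also have "sum f (insert a ` Pow I) = (\<Sum>A\<in>Pow I. f (insert a A))"
    using inj by (simp add: sum.reindex)
  finally show ?thesis by (simp add: sum.distrib)
qed

theorem ahlswede_daykin:
  fixes f1 f2 f3 f4 :: "'a set \<Rightarrow> real"
  assumes "finite I"
    and "\<And>A B. A \<subseteq> I \<Longrightarrow> B \<subseteq> I \<Longrightarrow> f1 A * f2 B \<le> f3 (A \<union> B) * f4 (A \<inter> B)"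
    and "\<And>A. A \<subseteq> I \<Longrightarrow> 0 \<le> f1 A \<and> 0 \<le> f2 A \<and> 0 \<le> f3 A \<and> 0 \<le> f4 A"
  shows "sum f1 (Pow I) * sum f2 (Pow I) \<le> sum f3 (Pow I) * sum f4 (Pow I)"
  using assms
proof (induction I arbitrary: f1 f2 f3 f4 rule: finite_induct)
  case empty
  then show ?case by simp
next
  case (insert a I)
  let ?fold = "\<lambda>f A. f A + f (insert a A)"
  have "sum (?fold f1) (Pow I) * sum (?fold f2) (Pow I) \<le> sum (?fold f3) (Pow I) * sum (?fold f4) (Pow I)"
  proof (rule insert.IH)
    fix A B assume AB: "A \<subseteq> I" "B \<subseteq> I"
    then have "a \<notin> A" "a \<notin> B" using insert.hyps by auto
    then have un: "insert a A \<union> B = insert a (A \<union> B)" "A \<union> insert a B = insert a (A \<union> B)"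
        "insert a A \<union> insert a B = insert a (A \<union> B)"
      and int: "insert a A \<inter> B = A \<inter> B" "A \<inter> insert a B = A \<inter> B"
        "insert a A \<inter> insert a B = insert a (A \<inter> B)" by auto
    have sub: "A \<subseteq> insert a I" "B \<subseteq> insert a I" "insert a A \<subseteq> insert a I" "insert a B \<subseteq> insert a I"
      "A \<union> B \<subseteq> insert a I" "A \<inter> B \<subseteq> insert a I" "insert a (A \<union> B) \<subseteq> insert a I"
      "insert a (A \<inter> B) \<subseteq> insert a I" using AB by auto
    show "?fold f1 A * ?fold f2 B \<le> ?fold f3 (A \<union> B) * ?fold f4 (A \<inter> B)"
    proof (rule four_functions_two_point)
      show "f1 A * f2 B \<le> f3 (A \<union> B) * f4 (A \<inter> B)"
        using insert.prems(1) sub by blast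
      show "f1 A * f2 (insert a B) \<le> f3 (insert a (A \<union> B)) * f4 (A \<inter> B)"
        using insert.prems(1)[OF sub(1,4)] un int by simp
      show "f1 (insert a A) * f2 B \<le> f3 (insert a (A \<union> B)) * f4 (A \<inter> B)"
        using insert.prems(1)[OF sub(3,2)] un int by simp
      show "f1 (insert a A) * f2 (insert a B) \<le> f3 (insert a (A \<union> B)) * f4 (insert a (A \<inter> B))"
        using insert.prems(1)[OF sub(3,4)] un int by simp
    qed (use insert.prems(2) sub in blast)+
  next
    fix A assume "A \<subseteq> I"
    then have "A \<subseteq> insert a I" "insert a A \<subseteq> insert a I" by auto
    then show "0 \<le> ?fold f1 A \<and> 0 \<le> ?fold f2 A \<and> 0 \<le> ?fold f3 A \<and> 0 \<le> ?fold f4 A"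
      using insert.prems(2) by (meson add_nonneg_nonneg)
  qed
  then show ?case unfolding sum_Pow_insert[OF insert.hyps] .
qed

theorem fkg_inequality:
  fixes M \<phi> \<psi> :: "'a set \<Rightarrow> real"
  assumes "finite I" and "log_supermodular_on I M" and M_nonneg: "\<And>A. A \<subseteq> I \<Longrightarrow> 0 \<le> M A"
    and \<phi>_mono: "\<And>A B. A \<subseteq> B \<Longrightarrow> B \<subseteq> I \<Longrightarrow> \<phi> A \<le> \<phi> B"
    and \<psi>_mono: "\<And>A B. A \<subseteq> B \<Longrightarrow> B \<subseteq> I \<Longrightarrow> \<psi> A \<le> \<psi> B"
  shows "0 \<le> weighted_cov M \<phi> \<psi> (Pow I)"
proof -
  define \<phi>' where "\<phi>' A = \<phi> A - \<phi> {}" for A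
  define \<psi>' where "\<psi>' A = \<psi> A - \<psi> {}" for A
  have \<phi>'_nonneg: "0 \<le> \<phi>' A" and \<psi>'_nonneg: "0 \<le> \<psi>' A" if "A \<subseteq> I" for A
    using \<phi>_mono[of "{}" A] \<psi>_mono[of "{}" A] that by (auto simp: \<phi>'_def \<psi>'_def)
  have "(\<Sum>A\<in>Pow I. M A * \<phi>' A) * (\<Sum>A\<in>Pow I. M A * \<psi>' A)
      \<le> (\<Sum>A\<in>Pow I. M A * \<phi>' A * \<psi>' A) * (\<Sum>A\<in>Pow I. M A)"
  proof (rule ahlswede_daykin[OF \<open>finite I\<close>])
    fix A B assume AB: "A \<subseteq> I" "B \<subseteq> I"
    then have UI: "A \<union> B \<subseteq> I" "A \<inter> B \<subseteq> I" by auto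
    have "M A * \<phi>' A * (M B * \<psi>' B) = (M A * M B) * (\<phi>' A * \<psi>' B)" by (simp add: ac_simps)
    also have "\<dots> \<le> (M (A \<union> B) * M (A \<inter> B)) * (\<phi>' (A \<union> B) * \<psi>' (A \<union> B))"
      using \<open>log_supermodular_on I M\<close> AB UI M_nonneg \<phi>'_nonneg \<psi>'_nonneg
        \<phi>_mono[of A "A \<union> B"] \<psi>_mono[of B "A \<union> B"]
      by (intro mult_mono[of "M A * M B"] mult_mono[of "\<phi>' A"])
        (auto simp: log_supermodular_on_def \<phi>'_def \<psi>'_def)
    finally show "M A * \<phi>' A * (M B * \<psi>' B) \<le> M (A \<union> B) * \<phi>' (A \<union> B) * \<psi>' (A \<union> B) * M (A \<inter> B)"
      by (simp add: ac_simps)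
  qed (simp add: M_nonneg \<phi>'_nonneg \<psi>'_nonneg)
  then have "0 \<le> weighted_cov M \<phi>' \<psi>' (Pow I)" by (simp add: weighted_cov_def mult.commute)
  then show ?thesis using weighted_cov_shift unfolding \<phi>'_def \<psi>'_def by metis
qed

\<comment> \<open>for \<open>k \<notin> Z\<close>, given that the coordinates other than \<open>k\<close> are \<open>Z\<close>: the conditional mean of \<open>f\<close>,
  and the conditional covariance of \<open>f\<close> and \<open>g\<close> times the conditional mass\<close>
definition flip_mean :: "'a \<Rightarrow> ('a set \<Rightarrow> real) \<Rightarrow> ('a set \<Rightarrow> real) \<Rightarrow> 'a set \<Rightarrow> real" where
  "flip_mean k \<nu> f Z = (\<nu> Z * f Z + \<nu> (insert k Z) * f (insert k Z)) / (\<nu> Z + \<nu> (insert k Z))"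

definition flip_cov :: "'a \<Rightarrow> ('a set \<Rightarrow> real) \<Rightarrow> ('a set \<Rightarrow> real) \<Rightarrow> ('a set \<Rightarrow> real) \<Rightarrow> 'a set \<Rightarrow> real" where
  "flip_cov k \<nu> f g Z = \<nu> Z * \<nu> (insert k Z) / (\<nu> Z + \<nu> (insert k Z))
     * (f (insert k Z) - f Z) * (g (insert k Z) - g Z)"

lemma two_point_second_moment:
  fixes a b f0 f1 g0 g1 :: real
  assumes "a + b \<noteq> 0"
  shows "a * f0 * g0 + b * f1 * g1
    = (a + b) * ((a * f0 + b * f1) / (a + b)) * ((a * g0 + b * g1) / (a + b))
      + a * b / (a + b) * (f1 - f0) * (g1 - g0)"
proof -
  have "(a * f0 + b * f1) * (a * g0 + b * g1) + a * b * (f1 - f0) * (g1 - g0)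
      = (a + b) * (a * f0 * g0 + b * f1 * g1)"
    by (simp add: algebra_simps)
  moreover have "(a + b) * ((a * f0 + b * f1) / (a + b)) * ((a * g0 + b * g1) / (a + b))
      = (a * f0 + b * f1) * (a * g0 + b * g1) / (a + b)"
    using assms by simp
  ultimately show ?thesis using assms by (simp add: add_divide_distrib[symmetric])
qed

lemma weighted_cov_Pow_insert:
  assumes "finite I" "k \<notin> I" and nonzero: "\<And>Z. Z \<subseteq> I \<Longrightarrow> \<nu> Z + \<nu> (insert k Z) \<noteq> 0"
  shows "weighted_cov \<nu> f g (Pow (insert k I))
    = weighted_cov (\<lambda>Z. \<nu> Z + \<nu> (insert k Z)) (flip_mean k \<nu> f) (flip_mean k \<nu> g) (Pow I)
      + (\<Sum>Z\<in>Pow I. \<nu> Z + \<nu> (insert k Z)) * (\<Sum>Z\<in>Pow I. flip_cov k \<nu> f g Z)"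
proof -
  let ?M = "\<lambda>Z. \<nu> Z + \<nu> (insert k Z)"
  have mean: "(\<Sum>A\<in>Pow (insert k I). \<nu> A * f A) = (\<Sum>Z\<in>Pow I. ?M Z * flip_mean k \<nu> f Z)" for f
    unfolding sum_Pow_insert[OF assms(1,2)] using nonzero by (intro sum.cong) (auto simp: flip_mean_def)
  have "(\<Sum>A\<in>Pow (insert k I). \<nu> A * f A * g A)
      = (\<Sum>Z\<in>Pow I. ?M Z * flip_mean k \<nu> f Z * flip_mean k \<nu> g Z + flip_cov k \<nu> f g Z)"
    unfolding sum_Pow_insert[OF assms(1,2)] using nonzero
    by (intro sum.cong refl) (simp add: flip_mean_def flip_cov_def two_point_second_moment)
  then show ?thesis
    unfolding weighted_cov_def mean sum_Pow_insert[OF assms(1,2), of \<nu>] sum.distrib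
    by (simp add: algebra_simps)
qed

lemma log_supermodular_on_flip_sum:
  assumes "k \<notin> I" "log_supermodular_on (insert k I) \<nu>" and nonneg: "\<And>A. A \<subseteq> insert k I \<Longrightarrow> 0 \<le> \<nu> A"
  shows "log_supermodular_on I (\<lambda>Z. \<nu> Z + \<nu> (insert k Z))"
  unfolding log_supermodular_on_def
proof (intro allI impI)
  fix A B assume AB: "A \<subseteq> I" "B \<subseteq> I"
  then have "k \<notin> A" "k \<notin> B" using assms(1) by auto
  then have un: "insert k A \<union> B = insert k (A \<union> B)" "A \<union> insert k B = insert k (A \<union> B)"
      "insert k A \<union> insert k B = insert k (A \<union> B)"
    and int: "insert k A \<inter> B = A \<inter> B" "A \<inter> insert k B = A \<inter> B"
      "insert k A \<inter> insert k B = insert k (A \<inter> B)" by auto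
  have sub: "A \<subseteq> insert k I" "B \<subseteq> insert k I" "insert k A \<subseteq> insert k I" "insert k B \<subseteq> insert k I"
    "A \<union> B \<subseteq> insert k I" "A \<inter> B \<subseteq> insert k I" "insert k (A \<union> B) \<subseteq> insert k I"
    "insert k (A \<inter> B) \<subseteq> insert k I" using AB by auto
  have lsm: "\<nu> X * \<nu> Y \<le> \<nu> (X \<union> Y) * \<nu> (X \<inter> Y)" if "X \<subseteq> insert k I" "Y \<subseteq> insert k I" for X Y
    using assms(2) that unfolding log_supermodular_on_def by blast
  show "(\<nu> A + \<nu> (insert k A)) * (\<nu> B + \<nu> (insert k B))
      \<le> (\<nu> (A \<union> B) + \<nu> (insert k (A \<union> B))) * (\<nu> (A \<inter> B) + \<nu> (insert k (A \<inter> B)))"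
  proof (rule four_functions_two_point)
    show "\<nu> A * \<nu> B \<le> \<nu> (A \<union> B) * \<nu> (A \<inter> B)" using lsm sub by blast
    show "\<nu> A * \<nu> (insert k B) \<le> \<nu> (insert k (A \<union> B)) * \<nu> (A \<inter> B)"
      using lsm[OF sub(1,4)] un int by simp
    show "\<nu> (insert k A) * \<nu> B \<le> \<nu> (insert k (A \<union> B)) * \<nu> (A \<inter> B)"
      using lsm[OF sub(3,2)] un int by simp
    show "\<nu> (insert k A) * \<nu> (insert k B) \<le> \<nu> (insert k (A \<union> B)) * \<nu> (insert k (A \<inter> B))"
      using lsm[OF sub(3,4)] un int by simp
  qed (use nonneg sub in blast)+
qed

lemma flip_mean_mono:
  assumes "k \<notin> I" "log_supermodular_on (insert k I) \<nu>" and pos: "\<And>A. A \<subseteq> insert k I \<Longrightarrow> 0 < \<nu> A"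
    and f_mono: "\<And>A B. A \<subseteq> B \<Longrightarrow> B \<subseteq> insert k I \<Longrightarrow> f A \<le> f B"
    and "A \<subseteq> B" "B \<subseteq> I"
  shows "flip_mean k \<nu> f A \<le> flip_mean k \<nu> f B"
proof -
  have sub: "A \<subseteq> insert k I" "insert k A \<subseteq> insert k I" "B \<subseteq> insert k I" "insert k B \<subseteq> insert k I"
    using assms(5,6) by auto
  define p where "p Z = \<nu> (insert k Z) / (\<nu> Z + \<nu> (insert k Z))" for Z
  have mean: "flip_mean k \<nu> f Z = f Z + p Z * (f (insert k Z) - f Z)"
    if "0 < \<nu> Z" "0 < \<nu> (insert k Z)" for Z
    using that by (simp add: flip_mean_def p_def field_simps)
  have p01: "0 \<le> p A" "p A \<le> 1"
    unfolding p_def using pos[OF sub(1)] pos[OF sub(2)] by auto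
  \<comment> \<open>log-supermodularity on the pair \<open>insert k A, B\<close>: the conditional probability of \<open>k\<close> increases\<close>
  have "\<nu> (insert k A) * \<nu> B \<le> \<nu> (insert k B) * \<nu> A"
  proof -
    have "insert k A \<union> B = insert k B" "insert k A \<inter> B = A"
      using assms(1,5,6) by auto
    then show ?thesis using assms(2) sub unfolding log_supermodular_on_def by (metis mult.commute)
  qed
  then have "p A \<le> p B"
    unfolding p_def using pos[OF sub(1)] pos[OF sub(2)] pos[OF sub(3)] pos[OF sub(4)]
    by (simp add: divide_simps algebra_simps)
  have "flip_mean k \<nu> f A = (1 - p A) * f A + p A * f (insert k A)"
    using mean pos sub by (simp add: algebra_simps)
  also have "\<dots> \<le> (1 - p A) * f B + p A * f (insert k B)"
    using p01 f_mono[of A B] f_mono[of "insert k A" "insert k B"] assms(5) sub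
    by (intro add_mono mult_left_mono) auto
  also have "\<dots> = f B + p A * (f (insert k B) - f B)" by (simp add: algebra_simps)
  also have "\<dots> \<le> f B + p B * (f (insert k B) - f B)"
    using \<open>p A \<le> p B\<close> f_mono[of B "insert k B"] sub by (intro add_left_mono mult_right_mono) auto
  also have "\<dots> = flip_mean k \<nu> f B" using mean pos sub by simp
  finally show ?thesis .
qed

theorem weighted_cov_ge_flip_cov:
  assumes "finite I" "k \<notin> I" "log_supermodular_on (insert k I) \<nu>"
    and pos: "\<And>A. A \<subseteq> insert k I \<Longrightarrow> 0 < \<nu> A"
    and "\<And>A B. A \<subseteq> B \<Longrightarrow> B \<subseteq> insert k I \<Longrightarrow> f A \<le> f B"
    and "\<And>A B. A \<subseteq> B \<Longrightarrow> B \<subseteq> insert k I \<Longrightarrow> g A \<le> g B"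
  shows "(\<Sum>A\<in>Pow (insert k I). \<nu> A) * (\<Sum>Z\<in>Pow I. flip_cov k \<nu> f g Z)
    \<le> weighted_cov \<nu> f g (Pow (insert k I))"
proof -
  have sub: "Z \<subseteq> insert k I" "insert k Z \<subseteq> insert k I" if "Z \<subseteq> I" for Z using that by auto
  have M_pos: "0 < \<nu> Z + \<nu> (insert k Z)" if "Z \<subseteq> I" for Z
    using pos[OF sub(1)[OF that]] pos[OF sub(2)[OF that]] by simp
  \<comment> \<open>the averaged-out functions are again monotone under a log-supermodular weight: FKG applies\<close>
  have "0 \<le> weighted_cov (\<lambda>Z. \<nu> Z + \<nu> (insert k Z)) (flip_mean k \<nu> f) (flip_mean k \<nu> g) (Pow I)"
  proof (rule fkg_inequality[OF assms(1)])
    show "log_supermodular_on I (\<lambda>Z. \<nu> Z + \<nu> (insert k Z))"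
      using assms(2,3) pos by (intro log_supermodular_on_flip_sum) (auto intro: less_imp_le)
  qed (use M_pos less_imp_le flip_mean_mono[OF assms(2,3) pos] assms(5,6) in blast)+
  moreover have "(\<Sum>A\<in>Pow (insert k I). \<nu> A) = (\<Sum>Z\<in>Pow I. \<nu> Z + \<nu> (insert k Z))"
    using sum_Pow_insert[OF assms(1,2)] .
  ultimately show ?thesis
    using weighted_cov_Pow_insert[OF assms(1,2)] M_pos by (simp add: less_imp_neq[symmetric])
qed

section \<open>Hyperbolic functions\<close>

lemma cosh_mult_cosh: "cosh x * cosh y = (cosh (x + y) + cosh (x - y)) / (2::real)"
  by (simp add: cosh_add cosh_diff)

lemma cosh_supermodular:
  fixes p a b :: real
  assumes "0 \<le> a" "0 \<le> b"
  shows "cosh (p + a) * cosh (p + b) \<le> cosh (p + a + b) * cosh p"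
proof -
  have "cosh (a - b) \<le> cosh (a + b)"
    using assms cosh_real_nonneg_le_iff[of "\<bar>a - b\<bar>" "a + b"] by simp
  moreover have "cosh (p + a) * cosh (p + b) = (cosh (2 * p + a + b) + cosh (a - b)) / 2"
    "cosh (p + a + b) * cosh p = (cosh (2 * p + a + b) + cosh (a + b)) / 2"
    unfolding cosh_mult_cosh by (simp_all add: algebra_simps)
  ultimately show ?thesis by simp
qed

lemma cosh_add_le_exp_abs: "cosh (t + d) \<le> exp \<bar>d\<bar> * cosh (t::real)"
proof -
  have "exp (t + d) \<le> exp \<bar>d\<bar> * exp t" "exp (- (t + d)) \<le> exp \<bar>d\<bar> * exp (- t)"
    by (simp_all add: exp_add[symmetric])
  then show ?thesis by (simp add: cosh_field_def algebra_simps)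
qed

lemma cosh_le_exp_abs: "cosh (t::real) \<le> exp \<bar>t\<bar>"
  using cosh_add_le_exp_abs[of 0 t] by simp

lemma tanh_diff_ge:
  fixes s t lam :: real
  assumes "s \<le> t" "\<bar>s\<bar> \<le> lam" "\<bar>t\<bar> \<le> lam"
  shows "(t - s) * exp (- 2 * lam) \<le> tanh t - tanh s"
proof -
  have "cosh t * cosh s \<le> exp \<bar>t\<bar> * exp \<bar>s\<bar>"
    by (intro mult_mono cosh_le_exp_abs) auto
  also have "\<dots> \<le> exp (2 * lam)" using assms by (simp add: exp_add[symmetric])
  finally have "cosh t * cosh s \<le> exp (2 * lam)" .
  then have "(t - s) * exp (- 2 * lam) \<le> (t - s) / (cosh t * cosh s)"
    using assms(1) by (simp add: exp_minus divide_inverse[symmetric] divide_left_mono)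
  also have "\<dots> \<le> sinh (t - s) / (cosh t * cosh s)"
    using real_le_x_sinh[of "t - s"] assms(1)
    by (intro divide_right_mono) (simp_all add: sinh_field_def exp_minus[symmetric])
  also have "\<dots> = tanh t - tanh s"
    by (simp add: tanh_def sinh_diff field_simps)
  finally show ?thesis .
qed

section \<open>Spin configurations indexed by sets\<close>

definition set_spin :: "nat set \<Rightarrow> nat \<Rightarrow> real" where
  "set_spin Y j = (if j \<in> Y then 1 else -1)"

definition spin_sum :: "nat \<Rightarrow> (nat \<Rightarrow> real) \<Rightarrow> nat set \<Rightarrow> real" where
  "spin_sum m w Y = (\<Sum>j<m. w j * set_spin Y j)"

lemma spin_sum_union_inter: "spin_sum m w (A \<union> B) + spin_sum m w (A \<inter> B) = spin_sum m w A + spin_sum m w B"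
  unfolding spin_sum_def sum.distrib[symmetric] by (intro sum.cong) (auto simp: set_spin_def)

lemma spin_sum_mono: "(\<And>j. j < m \<Longrightarrow> 0 \<le> w j) \<Longrightarrow> A \<subseteq> B \<Longrightarrow> spin_sum m w A \<le> spin_sum m w B"
  unfolding spin_sum_def by (intro sum_mono) (auto simp: set_spin_def)

lemma spin_sum_insert:
  assumes "k < m" "k \<notin> Z"
  shows "spin_sum m w (insert k Z) = spin_sum m w Z + 2 * w k"
proof -
  have "spin_sum m w (insert k Z) - spin_sum m w Z = (\<Sum>j<m. if j = k then 2 * w k else 0)"
    unfolding spin_sum_def sum_subtractf[symmetric] using assms(2)
    by (intro sum.cong) (auto simp: set_spin_def)
  then show ?thesis using assms(1) by simp
qed

lemma spin_sum_abs_le: "\<bar>spin_sum m w Y\<bar> \<le> (\<Sum>j<m. \<bar>w j\<bar>)"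
  unfolding spin_sum_def
  by (rule order_trans[OF sum_abs]) (auto intro!: sum_mono simp: set_spin_def abs_mult)

lemma spin_sum_scale: "spin_sum m (\<lambda>j. c * w j) Y = c * spin_sum m w Y"
  by (simp add: spin_sum_def sum_distrib_left mult.assoc)

lemma log_supermodular_on_mult:
  assumes "log_supermodular_on T F" "log_supermodular_on T G"
    and "\<And>A. A \<subseteq> T \<Longrightarrow> 0 \<le> F A" "\<And>A. A \<subseteq> T \<Longrightarrow> 0 \<le> G A"
  shows "log_supermodular_on T (\<lambda>A. F A * G A)"
  unfolding log_supermodular_on_def
proof (intro allI impI)
  fix A B assume AB: "A \<subseteq> T" "B \<subseteq> T"
  then have "A \<union> B \<subseteq> T" "A \<inter> B \<subseteq> T" by auto
  then have "(F A * F B) * (G A * G B) \<le> (F (A \<union> B) * F (A \<inter> B)) * (G (A \<union> B) * G (A \<inter> B))"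
    using assms AB unfolding log_supermodular_on_def
    by (intro mult_mono[of "F A * F B"]) (auto intro: mult_nonneg_nonneg)
  then show "F A * G A * (F B * G B) \<le> F (A \<union> B) * G (A \<union> B) * (F (A \<inter> B) * G (A \<inter> B))"
    by (simp add: ac_simps)
qed

lemma log_supermodular_on_prod:
  assumes "finite K" "\<And>i. i \<in> K \<Longrightarrow> log_supermodular_on T (F i)"
    and "\<And>i A. i \<in> K \<Longrightarrow> A \<subseteq> T \<Longrightarrow> 0 \<le> F i A"
  shows "log_supermodular_on T (\<lambda>A. \<Prod>i\<in>K. F i A)"
  using assms
proof (induction K rule: finite_induct)
  case empty
  then show ?case by (simp add: log_supermodular_on_def)
next
  case (insert a K)
  then show ?case by (simp add: log_supermodular_on_mult prod_nonneg)
qed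

lemma log_supermodular_on_exp_spin_sum: "log_supermodular_on T (\<lambda>Y. exp (a + spin_sum m w Y))"
  unfolding log_supermodular_on_def exp_add[symmetric]
  using spin_sum_union_inter[of m w] by (simp add: algebra_simps)

lemma log_supermodular_on_cosh_spin_sum:
  assumes "\<And>j. j < m \<Longrightarrow> 0 \<le> w j" "0 \<le> c"
  shows "log_supermodular_on T (\<lambda>Y. c * cosh (a + spin_sum m w Y))"
  unfolding log_supermodular_on_def
proof (intro allI impI)
  fix A B :: "nat set"
  let ?p = "a + spin_sum m w (A \<inter> B)"
  have "0 \<le> spin_sum m w A - spin_sum m w (A \<inter> B)" "0 \<le> spin_sum m w B - spin_sum m w (A \<inter> B)"
    using spin_sum_mono[OF assms(1)] by auto
  from cosh_supermodular[OF this, of ?p]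
  have "cosh (a + spin_sum m w A) * cosh (a + spin_sum m w B)
      \<le> cosh (a + (spin_sum m w A + spin_sum m w B - spin_sum m w (A \<inter> B))) * cosh ?p"
    by (simp add: algebra_simps)
  then have "cosh (a + spin_sum m w A) * cosh (a + spin_sum m w B)
      \<le> cosh (a + spin_sum m w (A \<union> B)) * cosh (a + spin_sum m w (A \<inter> B))"
    using spin_sum_union_inter[of m w A B] by (simp add: eq_diff_eq[symmetric] ac_simps)
  then show "c * cosh (a + spin_sum m w A) * (c * cosh (a + spin_sum m w B))
      \<le> c * cosh (a + spin_sum m w (A \<union> B)) * (c * cosh (a + spin_sum m w (A \<inter> B)))"
    using assms(2) by (simp add: ac_simps mult_left_mono)
qed

definition spin_config :: "(nat \<Rightarrow> real) \<Rightarrow> nat \<Rightarrow> nat set \<Rightarrow> nat \<Rightarrow> real" where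
  "spin_config \<sigma> m Y = (\<lambda>j. if j < m then \<sigma> j * set_spin Y j else 0)"

lemma bij_betw_spin_config:
  assumes \<sigma>: "\<And>j. \<sigma> j = 1 \<or> \<sigma> j = -1"
  shows "bij_betw (spin_config \<sigma> m) (Pow {..<m}) (spins m)"
proof (rule bij_betw_byWitness[where f' = "\<lambda>y. {j. j < m \<and> \<sigma> j * y j = 1}"])
  have \<sigma>_sq: "\<sigma> j * \<sigma> j = 1" for j using \<sigma>[of j] by auto
  show "\<forall>Y\<in>Pow {..<m}. {j. j < m \<and> \<sigma> j * spin_config \<sigma> m Y j = 1} = Y"
    using \<sigma>_sq by (auto simp: spin_config_def set_spin_def mult.assoc[symmetric])
  show "\<forall>y\<in>spins m. spin_config \<sigma> m {j. j < m \<and> \<sigma> j * y j = 1} = y"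
  proof
    fix y assume y: "y \<in> spins m"
    show "spin_config \<sigma> m {j. j < m \<and> \<sigma> j * y j = 1} = y"
    proof
      fix j
      show "spin_config \<sigma> m {j. j < m \<and> \<sigma> j * y j = 1} j = y j"
        using y \<sigma>[of j] unfolding spins_def spin_config_def set_spin_def by (cases "j < m") auto
    qed
  qed
  show "spin_config \<sigma> m ` Pow {..<m} \<subseteq> spins m"
    using \<sigma> by (auto simp: spins_def spin_config_def set_spin_def) (metis \<sigma>)+
qed auto

lemma finite_spins: "finite (spins n)"
  using bij_betw_spin_config[of "\<lambda>_. 1" n] bij_betw_finite by auto

lemma spins_nonempty: "spins n \<noteq> {}"
proof -
  have "(\<lambda>i. if i < n then 1 else 0) \<in> spins n" unfolding spins_def by auto
  then show ?thesis by blast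
qed

lemma sum_pinned_spins_prod:
  fixes w :: "nat \<Rightarrow> real \<Rightarrow> real"
  assumes S: "S \<subseteq> {..<n}" and s: "\<And>i. i \<in> S \<Longrightarrow> s i = 1 \<or> s i = -1"
  shows "(\<Sum>x\<in>{x\<in>spins n. \<forall>i\<in>S. x i = s i}. \<Prod>i<n. w i (x i))
       = (\<Prod>i<n. if i \<in> S then w i (s i) else w i 1 + w i (-1))"
proof -
  define B where "B i = (if i \<in> S then {s i} else {1, -1::real})" for i
  have "(\<Prod>i<n. if i \<in> S then w i (s i) else w i 1 + w i (-1)) = (\<Prod>i<n. \<Sum>t\<in>B i. w i t)"
    by (intro prod.cong) (auto simp: B_def)
  also have "\<dots> = (\<Sum>p\<in>PiE {..<n} B. \<Prod>i<n. w i (p i))"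
    by (rule prod_sum_PiE) (auto simp: B_def)
  also have "\<dots> = (\<Sum>x\<in>{x\<in>spins n. \<forall>i\<in>S. x i = s i}. \<Prod>i<n. w i (x i))"
  proof (rule sum.reindex_bij_witness[where i = "\<lambda>x. restrict x {..<n}" and j = "\<lambda>p i. if i < n then p i else 0"])
    fix p assume p: "p \<in> PiE {..<n} B"
    show "restrict (\<lambda>i. if i < n then p i else 0) {..<n} = p"
      using p by (auto simp: PiE_def extensional_def restrict_def)
    show "(\<lambda>i. if i < n then p i else 0) \<in> {x \<in> spins n. \<forall>i\<in>S. x i = s i}"
      using p S s unfolding spins_def B_def PiE_def Pi_def by (auto split: if_splits) (metis insertE singletonD)
    show "(\<Prod>i<n. w i (if i < n then p i else 0)) = (\<Prod>i<n. w i (p i))"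
      by (intro prod.cong) auto
  next
    fix x assume x: "x \<in> {x \<in> spins n. \<forall>i\<in>S. x i = s i}"
    show "(\<lambda>i. if i < n then restrict x {..<n} i else 0) = x"
      using x unfolding spins_def by (auto simp: restrict_def)
    show "restrict x {..<n} \<in> PiE {..<n} B"
      using x unfolding spins_def B_def by auto
  qed
  finally show ?thesis ..
qed

section \<open>Restricted Boltzmann machines with pinned observed spins\<close>

lemma rbm_Z_pos: "0 < rbm_Z n m J h g"
  unfolding rbm_Z_def
  by (intro sum_pos finite_spins spins_nonempty) (simp_all add: rbm_weight_def)

lemma rbm_pX_nonneg: "0 \<le> rbm_pX n m J h g x"
  unfolding rbm_pX_def using rbm_Z_pos
  by (intro divide_nonneg_pos sum_nonneg) (auto simp: rbm_weight_def less_imp_le)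

lemma sum_rbm_pX: "(\<Sum>x\<in>spins n. rbm_pX n m J h g x) = 1"
  unfolding rbm_pX_def sum_divide_distrib[symmetric] rbm_Z_def[symmetric]
  using rbm_Z_pos by (simp add: less_imp_neq[symmetric])

lemma rbm_avgCov_ge:
  assumes "\<And>x. x \<in> spins n \<Longrightarrow> c \<le> rbm_condCov n m J h g u v S x"
  shows "c \<le> rbm_avgCov n m J h g u v S"
proof -
  have "c = (\<Sum>x\<in>spins n. rbm_pX n m J h g x * c)"
    by (simp add: sum_distrib_right[symmetric] sum_rbm_pX)
  also have "\<dots> \<le> rbm_avgCov n m J h g u v S"
    unfolding rbm_avgCov_def using assms by (intro sum_mono mult_left_mono rbm_pX_nonneg)
  finally show ?thesis .
qed

locale rbm_pinned =
  fixes n m :: nat and J :: "nat \<Rightarrow> nat \<Rightarrow> real" and h g :: "nat \<Rightarrow> real"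
    and S :: "nat set" and s :: "nat \<Rightarrow> real"
  assumes S_sub: "S \<subseteq> {..<n}" and s_spins: "s \<in> spins n"
begin

definition local_field :: "nat \<Rightarrow> (nat \<Rightarrow> real) \<Rightarrow> real" where
  "local_field i y = h i + (\<Sum>j<m. J i j * y j)"

definition obs_factor :: "nat \<Rightarrow> real \<Rightarrow> real" where
  "obs_factor i t = (if i \<in> S then exp (s i * t) else 2 * cosh t)"

definition pinned_moment :: "nat set \<Rightarrow> real" where
  "pinned_moment U = (\<Sum>y\<in>spins m. exp (\<Sum>j<m. g j * y j)
     * (\<Prod>i<n. obs_factor i (local_field i y)) * (\<Prod>i\<in>U. tanh (local_field i y)))"

lemma pinned_spin: "i \<in> S \<Longrightarrow> s i = 1 \<or> s i = -1"
  using s_spins S_sub unfolding spins_def by auto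

lemma obs_factor_pos: "0 < obs_factor i t"
  by (simp add: obs_factor_def)

lemma obs_factor_add_le: "obs_factor i (t + d) \<le> exp \<bar>d\<bar> * obs_factor i t"
proof (cases "i \<in> S")
  case True
  then have "\<bar>s i * d\<bar> = \<bar>d\<bar>" using pinned_spin[OF True] by (auto simp: abs_mult)
  then show ?thesis
    using True exp_add[of "s i * t" "s i * d"] by (simp add: obs_factor_def distrib_left mult.commute)
next
  case False
  then show ?thesis using cosh_add_le_exp_abs[of t d] by (simp add: obs_factor_def)
qed

lemma rbm_weight_eq: "rbm_weight n m J h g x y = exp (\<Sum>i<n. x i * local_field i y) * exp (\<Sum>j<m. g j * y j)"
proof -
  have "(\<Sum>i<n. \<Sum>j<m. x i * J i j * y j) + (\<Sum>i<n. h i * x i) = (\<Sum>i<n. x i * local_field i y)"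
    unfolding local_field_def sum.distrib[symmetric]
    by (intro sum.cong refl) (simp add: distrib_left sum_distrib_left mult_ac)
  then show ?thesis unfolding rbm_weight_def exp_add[symmetric] by simp
qed

\<comment> \<open>summing out the unpinned observed spins: each contributes \<open>2 cosh\<close>, or \<open>2 sinh\<close> if it is in \<open>U\<close>\<close>
lemma sum_pinned_rbm_weight:
  assumes U: "U \<subseteq> {..<n}" "U \<inter> S = {}"
  shows "(\<Sum>x\<in>{x\<in>spins n. \<forall>i\<in>S. x i = s i}. rbm_weight n m J h g x y * (\<Prod>i\<in>U. x i))
       = exp (\<Sum>j<m. g j * y j) * (\<Prod>i<n. obs_factor i (local_field i y)) * (\<Prod>i\<in>U. tanh (local_field i y))"
proof -
  define w where "w i t = exp (t * local_field i y) * (if i \<in> U then t else 1)" for i t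
  have restrict_U: "(\<Prod>i\<in>U. f i) = (\<Prod>i<n. if i \<in> U then f i else 1)" for f :: "nat \<Rightarrow> real"
  proof -
    have "{i \<in> {..<n}. i \<in> U} = U" using U(1) by auto
    then show ?thesis using prod.inter_filter[of "{..<n}" f "\<lambda>i. i \<in> U"] by simp
  qed
  have "(\<Sum>x\<in>{x\<in>spins n. \<forall>i\<in>S. x i = s i}. rbm_weight n m J h g x y * (\<Prod>i\<in>U. x i))
      = exp (\<Sum>j<m. g j * y j) * (\<Sum>x\<in>{x\<in>spins n. \<forall>i\<in>S. x i = s i}. \<Prod>i<n. w i (x i))"
    unfolding sum_distrib_left rbm_weight_eq exp_sum[OF finite_lessThan] restrict_U w_def prod.distrib
    by (simp add: mult_ac)
  also have "(\<Sum>x\<in>{x\<in>spins n. \<forall>i\<in>S. x i = s i}. \<Prod>i<n. w i (x i))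
      = (\<Prod>i<n. if i \<in> S then w i (s i) else w i 1 + w i (-1))"
    using S_sub pinned_spin by (intro sum_pinned_spins_prod) auto
  also have "\<dots> = (\<Prod>i<n. obs_factor i (local_field i y) * (if i \<in> U then tanh (local_field i y) else 1))"
    using U(2) by (intro prod.cong refl)
      (auto simp: w_def obs_factor_def tanh_def sinh_field_def cosh_field_def add_pos_pos less_imp_neq[symmetric])
  finally show ?thesis unfolding prod.distrib restrict_U[symmetric] by (simp add: mult.assoc)
qed

lemma rbm_condE_prod:
  assumes "U \<subseteq> {..<n}" "U \<inter> S = {}"
  shows "rbm_condE n m J h g S s (\<lambda>x. \<Prod>i\<in>U. x i) = pinned_moment U / pinned_moment {}"
proof -
  have sum_pX: "(\<Sum>x\<in>{x\<in>spins n. \<forall>i\<in>S. x i = s i}. rbm_pX n m J h g x * (\<Prod>i\<in>V. x i))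
      = pinned_moment V / rbm_Z n m J h g" if "V \<subseteq> {..<n}" "V \<inter> S = {}" for V
    unfolding rbm_pX_def pinned_moment_def sum_divide_distrib sum_distrib_right
      sum.swap[where B = "spins m"] sum_pinned_rbm_weight[OF that, symmetric]
    by (simp add: sum_divide_distrib)
  show ?thesis
    using sum_pX[OF assms] sum_pX[of "{}"] rbm_Z_pos[of n m J h g]
    by (simp add: rbm_condE_def Let_def)
qed

lemma rbm_condCov_eq:
  assumes "u < n" "v < n" "u \<noteq> v" "u \<notin> S" "v \<notin> S"
  shows "rbm_condCov n m J h g u v S s
    = pinned_moment {u, v} / pinned_moment {} - (pinned_moment {u} / pinned_moment {}) * (pinned_moment {v} / pinned_moment {})"
  using rbm_condE_prod[of "{u, v}"] rbm_condE_prod[of "{u}"] rbm_condE_prod[of "{v}"] assms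
  by (simp add: rbm_condCov_def)

end

lemma two_point_cov_ge:
  fixes a b r \<delta> d1 d2 :: real
  assumes "0 < a" "0 < b" "a \<le> r * b" "b \<le> r * a" "0 \<le> \<delta>" "\<delta> \<le> d1" "\<delta> \<le> d2"
  shows "(a + b) * (\<delta>\<^sup>2 / (4 * r)) \<le> a * b / (a + b) * d1 * d2"
proof -
  have "0 < r"
  proof (rule ccontr)
    assume "\<not> 0 < r"
    then have "r * b \<le> 0" using assms(2) by (simp add: mult_nonpos_nonneg)
    then show False using assms(1,3) by linarith
  qed
  have "(a + b) * (a + b) \<le> 4 * r * (a * b)"
  proof (cases "a \<le> b")
    case True
    have "(a + b) * (a + b) \<le> (2 * b) * (2 * b)" using True assms(1) by (intro mult_mono) auto
    also have "\<dots> \<le> 4 * b * (r * a)" using assms(2,4) by simp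
    finally show ?thesis by (simp add: mult_ac)
  next
    case False
    have "(a + b) * (a + b) \<le> (2 * a) * (2 * a)" using False assms(2) by (intro mult_mono) auto
    also have "\<dots> \<le> 4 * a * (r * b)" using assms(1,3) by simp
    finally show ?thesis by (simp add: mult_ac)
  qed
  then have "(a + b) / (4 * r) \<le> a * b / (a + b)"
    using \<open>0 < r\<close> assms(1,2) by (simp add: divide_simps mult_ac)
  moreover have "\<delta>\<^sup>2 \<le> d1 * d2" using assms(5-7) unfolding power2_eq_square by (intro mult_mono) auto
  ultimately have "((a + b) / (4 * r)) * \<delta>\<^sup>2 \<le> (a * b / (a + b)) * (d1 * d2)"
    using \<open>0 < r\<close> assms(1,2) by (intro mult_mono) auto
  then show ?thesis by (simp add: mult_ac)
qed

locale rbm_pinned_consistent = rbm_pinned +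
  fixes alpha lam :: real
  assumes consistent: "locally_consistent n m J h g alpha lam"
begin

definition column_sign :: "nat \<Rightarrow> real" where
  "column_sign j = (if \<forall>i<n. 0 \<le> J i j then 1 else -1)"

definition aligned_field :: "nat \<Rightarrow> nat set \<Rightarrow> real" where
  "aligned_field i Y = h i + spin_sum m (\<lambda>j. \<bar>J i j\<bar>) Y"

definition latent_weight :: "nat set \<Rightarrow> real" where
  "latent_weight Y = exp (spin_sum m (\<lambda>j. g j * column_sign j) Y) * (\<Prod>i<n. obs_factor i (aligned_field i Y))"

lemma column_sign_cases: "column_sign j = 1 \<or> column_sign j = -1"
  by (simp add: column_sign_def)

lemma J_mult_column_sign:
  assumes "i < n" "j < m"
  shows "J i j * column_sign j = \<bar>J i j\<bar>"
proof (cases "\<forall>i<n. 0 \<le> J i j")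
  case False
  then have "\<forall>i<n. J i j \<le> 0" using consistent assms(2) unfolding locally_consistent_def by blast
  moreover have "column_sign j = -1" using False by (simp add: column_sign_def)
  ultimately show ?thesis using assms(1) by simp
qed (use assms in \<open>simp add: column_sign_def\<close>)

lemma local_field_spin_config:
  "i < n \<Longrightarrow> local_field i (spin_config column_sign m Y) = aligned_field i Y"
  unfolding local_field_def aligned_field_def spin_sum_def spin_config_def
  by (simp, intro sum.cong refl) (simp add: J_mult_column_sign mult.assoc[symmetric])

\<comment> \<open>flipping each latent spin by the sign of its column makes every coupling nonnegative\<close>
lemma pinned_moment_eq_latent_sum:
  assumes "U \<subseteq> {..<n}"
  shows "pinned_moment U = (\<Sum>Y\<in>Pow {..<m}. latent_weight Y * (\<Prod>i\<in>U. tanh (aligned_field i Y)))"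
proof -
  have g_sum: "(\<Sum>j<m. g j * spin_config column_sign m Y j) = spin_sum m (\<lambda>j. g j * column_sign j) Y" for Y
    unfolding spin_sum_def spin_config_def by (intro sum.cong refl) (simp add: mult.assoc)
  have "pinned_moment U = (\<Sum>Y\<in>Pow {..<m}. exp (\<Sum>j<m. g j * spin_config column_sign m Y j)
      * (\<Prod>i<n. obs_factor i (local_field i (spin_config column_sign m Y)))
      * (\<Prod>i\<in>U. tanh (local_field i (spin_config column_sign m Y))))"
    unfolding pinned_moment_def
    by (rule sum.reindex_bij_betw[OF bij_betw_spin_config[OF column_sign_cases], symmetric])
  also have "\<dots> = (\<Sum>Y\<in>Pow {..<m}. latent_weight Y * (\<Prod>i\<in>U. tanh (aligned_field i Y)))"
    using assms unfolding g_sum latent_weight_def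
    by (intro sum.cong refl arg_cong2[where f = "(*)"] prod.cong) (auto simp: local_field_spin_config)
  finally show ?thesis .
qed

lemma latent_weight_pos: "0 < latent_weight Y"
  by (simp add: latent_weight_def obs_factor_pos prod_pos)

lemma log_supermodular_on_latent_weight: "log_supermodular_on T latent_weight"
proof -
  have "log_supermodular_on T (\<lambda>Y. obs_factor i (aligned_field i Y))" for i
  proof (cases "i \<in> S")
    case True
    then show ?thesis
      using log_supermodular_on_exp_spin_sum[of T "s i * h i" m "\<lambda>j. s i * \<bar>J i j\<bar>"]
      by (simp add: obs_factor_def aligned_field_def spin_sum_scale distrib_left)
  next
    case False
    then show ?thesis
      using log_supermodular_on_cosh_spin_sum[of m "\<lambda>j. \<bar>J i j\<bar>" 2 T "h i"]
      by (simp add: obs_factor_def aligned_field_def)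
  qed
  then show ?thesis
    unfolding latent_weight_def
    using log_supermodular_on_exp_spin_sum[of T 0]
    by (intro log_supermodular_on_mult log_supermodular_on_prod)
      (auto simp: obs_factor_pos less_imp_le prod_nonneg)
qed

lemma aligned_field_mono: "A \<subseteq> B \<Longrightarrow> aligned_field i A \<le> aligned_field i B"
  unfolding aligned_field_def by (simp add: spin_sum_mono)

lemma aligned_field_insert: "k < m \<Longrightarrow> k \<notin> Z \<Longrightarrow> aligned_field i (insert k Z) = aligned_field i Z + 2 * \<bar>J i k\<bar>"
  unfolding aligned_field_def by (simp add: spin_sum_insert)

lemma aligned_field_abs_le: "i < n \<Longrightarrow> \<bar>aligned_field i Y\<bar> \<le> lam"
  using abs_triangle_ineq[of "h i" "spin_sum m (\<lambda>j. \<bar>J i j\<bar>) Y"] spin_sum_abs_le[of m "\<lambda>j. \<bar>J i j\<bar>" Y]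
    consistent
  unfolding aligned_field_def locally_consistent_def by fastforce

lemma latent_weight_flip_le:
  assumes "k < m" "k \<notin> Z" and AB: "(A, B) = (insert k Z, Z) \<or> (A, B) = (Z, insert k Z)"
  shows "latent_weight A \<le> exp (2 * lam) * latent_weight B"
proof -
  define d where "d i = aligned_field i A - aligned_field i B" for i
  define e where "e = spin_sum m (\<lambda>j. g j * column_sign j) A - spin_sum m (\<lambda>j. g j * column_sign j) B"
  have "\<bar>d i\<bar> = 2 * \<bar>J i k\<bar>" for i
    using AB unfolding d_def by (auto simp: aligned_field_insert[OF assms(1,2)])
  moreover have "\<bar>e\<bar> = 2 * \<bar>g k\<bar>"
    using AB column_sign_cases[of k] unfolding e_def by (auto simp: spin_sum_insert[OF assms(1,2)])
  moreover have "(\<Sum>i<n. \<bar>J i k\<bar>) + \<bar>g k\<bar> \<le> lam"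
    using consistent assms(1) unfolding locally_consistent_def by blast
  ultimately have "\<bar>e\<bar> + (\<Sum>i<n. \<bar>d i\<bar>) \<le> 2 * lam" by (simp add: sum_distrib_left[symmetric])
  have "obs_factor i (aligned_field i A) \<le> exp \<bar>d i\<bar> * obs_factor i (aligned_field i B)" for i
    using obs_factor_add_le[of i "aligned_field i B" "d i"] by (simp add: d_def)
  then have "(\<Prod>i<n. obs_factor i (aligned_field i A)) \<le> (\<Prod>i<n. exp \<bar>d i\<bar> * obs_factor i (aligned_field i B))"
    by (intro prod_mono) (simp add: obs_factor_pos less_imp_le)
  then have obs: "(\<Prod>i<n. obs_factor i (aligned_field i A))
      \<le> exp (\<Sum>i<n. \<bar>d i\<bar>) * (\<Prod>i<n. obs_factor i (aligned_field i B))"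
    by (simp add: prod.distrib exp_sum)
  have "exp (spin_sum m (\<lambda>j. g j * column_sign j) A) \<le> exp \<bar>e\<bar> * exp (spin_sum m (\<lambda>j. g j * column_sign j) B)"
    unfolding e_def exp_add[symmetric] by simp
  from mult_mono[OF this obs]
  have "latent_weight A \<le> exp \<bar>e\<bar> * exp (\<Sum>i<n. \<bar>d i\<bar>) * latent_weight B"
    by (simp add: latent_weight_def obs_factor_pos less_imp_le prod_nonneg mult_ac)
  also have "\<dots> \<le> exp (2 * lam) * latent_weight B"
    using \<open>\<bar>e\<bar> + (\<Sum>i<n. \<bar>d i\<bar>) \<le> 2 * lam\<close> latent_weight_pos
    by (simp add: exp_add[symmetric] mult_right_mono less_imp_le)
  finally show ?thesis .
qed

lemma tanh_aligned_field_flip_ge: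
  assumes "i < n" "k < m" "J i k \<noteq> 0" "k \<notin> Z"
  shows "2 * alpha * exp (- 2 * lam) \<le> tanh (aligned_field i (insert k Z)) - tanh (aligned_field i Z)"
proof -
  have "alpha \<le> \<bar>J i k\<bar>" using consistent assms(1-3) unfolding locally_consistent_def by auto
  then have "2 * alpha * exp (- 2 * lam) \<le> (aligned_field i (insert k Z) - aligned_field i Z) * exp (- 2 * lam)"
    by (simp add: aligned_field_insert[OF assms(2,4)])
  also have "\<dots> \<le> tanh (aligned_field i (insert k Z)) - tanh (aligned_field i Z)"
    by (intro tanh_diff_ge aligned_field_mono aligned_field_abs_le assms(1)) auto
  finally show ?thesis .
qed

lemma rbm_condCov_eq_weighted_cov:
  assumes "u < n" "v < n" "u \<noteq> v" "u \<notin> S" "v \<notin> S"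
  shows "rbm_condCov n m J h g u v S s
    = weighted_cov latent_weight (\<lambda>Y. tanh (aligned_field u Y)) (\<lambda>Y. tanh (aligned_field v Y)) (Pow {..<m})
      / (\<Sum>Y\<in>Pow {..<m}. latent_weight Y)\<^sup>2"
proof -
  have "0 < (\<Sum>Y\<in>Pow {..<m}. latent_weight Y)" by (intro sum_pos) (auto simp: latent_weight_pos)
  moreover have "a / W - (b / W) * (c / W) = (W * a - b * c) / W\<^sup>2" if "W \<noteq> 0" for a b c W :: real
    using that by (simp add: field_simps power2_eq_square)
  ultimately show ?thesis
    using assms
    by (simp add: rbm_condCov_eq pinned_moment_eq_latent_sum weighted_cov_def mult.assoc)
qed

lemma flip_cov_tanh_aligned_field_ge:
  assumes "u < n" "v < n" "k < m" "J u k \<noteq> 0" "J v k \<noteq> 0" "0 \<le> alpha" "k \<notin> Z"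
  shows "(latent_weight Z + latent_weight (insert k Z)) * (alpha\<^sup>2 * exp (- 6 * lam))
    \<le> flip_cov k latent_weight (\<lambda>Y. tanh (aligned_field u Y)) (\<lambda>Y. tanh (aligned_field v Y)) Z"
proof -
  have "(2 * alpha * exp (- 2 * lam))\<^sup>2 / (4 * exp (2 * lam)) = alpha\<^sup>2 * exp (- 6 * lam)"
  proof -
    have "exp (- 2 * lam) * exp (- 2 * lam) = exp (- 6 * lam) * exp (2 * lam)"
      by (simp add: exp_add[symmetric])
    then show ?thesis by (simp add: power2_eq_square field_simps)
  qed
  moreover have "(latent_weight Z + latent_weight (insert k Z)) * ((2 * alpha * exp (- 2 * lam))\<^sup>2 / (4 * exp (2 * lam)))
      \<le> flip_cov k latent_weight (\<lambda>Y. tanh (aligned_field u Y)) (\<lambda>Y. tanh (aligned_field v Y)) Z"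
    unfolding flip_cov_def
  proof (rule two_point_cov_ge)
    show "latent_weight Z \<le> exp (2 * lam) * latent_weight (insert k Z)"
      "latent_weight (insert k Z) \<le> exp (2 * lam) * latent_weight Z"
      using latent_weight_flip_le[OF assms(3,7)] by auto
    show "2 * alpha * exp (- 2 * lam) \<le> tanh (aligned_field u (insert k Z)) - tanh (aligned_field u Z)"
      by (rule tanh_aligned_field_flip_ge[OF assms(1,3,4,7)])
    show "2 * alpha * exp (- 2 * lam) \<le> tanh (aligned_field v (insert k Z)) - tanh (aligned_field v Z)"
      by (rule tanh_aligned_field_flip_ge[OF assms(2,3,5,7)])
  qed (use assms(6) latent_weight_pos in auto)
  ultimately show ?thesis by metis
qed

theorem rbm_condCov_ge:
  assumes "u < n" "v < n" "u \<noteq> v" "u \<notin> S" "v \<notin> S"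
    and "k < m" "J u k \<noteq> 0" "J v k \<noteq> 0" "0 \<le> alpha"
  shows "alpha\<^sup>2 * exp (- 6 * lam) \<le> rbm_condCov n m J h g u v S s"
proof -
  define I where "I = {..<m} - {k}"
  have I: "finite I" "k \<notin> I" "insert k I = {..<m}" using assms(6) by (auto simp: I_def)
  let ?f = "\<lambda>Y. tanh (aligned_field u Y)" and ?f' = "\<lambda>Y. tanh (aligned_field v Y)"
  define W where "W = (\<Sum>Y\<in>Pow {..<m}. latent_weight Y)"
  have "0 < W" unfolding W_def by (intro sum_pos) (auto simp: latent_weight_pos)
  have "W * (alpha\<^sup>2 * exp (- 6 * lam))
      = (\<Sum>Z\<in>Pow I. (latent_weight Z + latent_weight (insert k Z)) * (alpha\<^sup>2 * exp (- 6 * lam)))"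
    unfolding W_def I(3)[symmetric] sum_Pow_insert[OF I(1,2)] by (simp add: sum_distrib_right)
  also have "\<dots> \<le> (\<Sum>Z\<in>Pow I. flip_cov k latent_weight ?f ?f' Z)"
    using I(2) assms by (intro sum_mono flip_cov_tanh_aligned_field_ge) auto
  finally have "W * (W * (alpha\<^sup>2 * exp (- 6 * lam))) \<le> W * (\<Sum>Z\<in>Pow I. flip_cov k latent_weight ?f ?f' Z)"
    using \<open>0 < W\<close> by simp
  also have "\<dots> \<le> weighted_cov latent_weight ?f ?f' (Pow {..<m})"
    unfolding W_def I(3)[symmetric]
    using I(1,2) log_supermodular_on_latent_weight latent_weight_pos
    by (intro weighted_cov_ge_flip_cov) (auto simp: aligned_field_mono)
  finally show ?thesis
    using \<open>0 < W\<close> unfolding rbm_condCov_eq_weighted_cov[OF assms(1-5)] W_def[symmetric]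
    by (simp add: power2_eq_square pos_le_divide_eq mult_ac)
qed

end

theorem mainTheorem3:
  fixes n m :: nat and J :: "nat \<Rightarrow> nat \<Rightarrow> real" and h g :: "nat \<Rightarrow> real"
    and alpha lam :: real and u v k :: nat and S :: "nat set"
  assumes "locally_consistent n m J h g alpha lam"
    and "alpha > 0"
    and "u < n" and "v < n" and "u \<noteq> v"
    and "k < m" and "J u k \<noteq> 0" and "J v k \<noteq> 0"
    and "S \<subseteq> {..<n} - {u, v}"
  shows "rbm_avgCov n m J h g u v S \<ge> alpha\<^sup>2 * exp (- 12 * lam)"
proof (rule rbm_avgCov_ge)
  fix x assume "x \<in> spins n"
  then interpret rbm_pinned_consistent n m J h g S x alpha lam
    using assms by unfold_locales auto
  have "0 \<le> lam" using aligned_field_abs_le[OF \<open>u < n\<close>, of "{}"] by linarith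
  then have "alpha\<^sup>2 * exp (- 12 * lam) \<le> alpha\<^sup>2 * exp (- 6 * lam)" by (intro mult_left_mono) auto
  also have "\<dots> \<le> rbm_condCov n m J h g u v S x"
    using assms by (intro rbm_condCov_ge) auto
  finally show "alpha\<^sup>2 * exp (- 12 * lam) \<le> rbm_condCov n m J h g u v S x" .
qed

end
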